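(* There exists a function $f:\mathbb{N}\to\mathbb{R}$ with $f(n)/n^3\to0$ as $n\to\infty$ such that the following holds. Let $n$ and $\rho$ be positive integers with $\rho<n/2$, and let $k=\lfloor n/2\rfloor$. Let $s_1,\ldots,s_k$ be nonnegative real numbers satisfying $s_1+\ldots+s_k\leqslant\rho$. Then $$\varphi(s_1,\ldots,s_k):=\sum_{r=\rho}^{k}\min\left\{\frac{r^2}{4},\,1s_1+2s_2+\ldots+rs_r\right\}\leqslant\frac{15\,625\,n^3}{1\,597\,536}+f(n).$$ *)

theory Defs
  imports Complex_Main
begin

end

theory Submission
  imports Defs "HOL-Real_Asymp.Real_Asymp"
begin

(* The bound is a weak-duality argument for the linear program behind phi. For weights
   0 <= w_r <= 1 we have min (r^2/4, T_r) <= (1 - w_r) r^2/4 + w_r T_r with T_r = sum_{i<=r} i s_i,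
   and exchanging the order of summation gives sum_r w_r T_r <= rho c as soon as
   i * sum_{r>=i} w_r <= c for every i. We take w_r = 0 below A ~ k/4, w_r = c/(r(r+1)) on [A,B)
   and w_r = 1 from B ~ 125k/129 on, with c = B(k+1-B); then i * sum_{r>=i} w_r = c exactly on
   [A,B]. The remaining sum of (1 - w_r) r^2/4 telescopes against a cubic potential up to O(k^2),
   and maximising the resulting cubic in rho (at rho ~ 50k/129) gives 15625 k^3/199692 + O(k^2),
   that is 15625 n^3/1597536 + O(n^2) for k = n div 2. *)

lemma min_le_convex_combination:
  fixes a b m :: real
  assumes "0 \<le> m" "m \<le> 1"
  shows "min a b \<le> (1 - m) * a + m * b"
proof -
  have "(1 - m) * min a b \<le> (1 - m) * a" "m * min a b \<le> m * b"
    using assms by (simp_all add: mult_left_mono)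
  then show ?thesis by (simp add: algebra_simps)
qed

lemma sum_weighted_prefix_sums_le:
  fixes \<mu> s :: "nat \<Rightarrow> real"
  assumes \<mu>_nonneg: "\<And>r. 0 \<le> \<mu> r" and s_nonneg: "\<forall>i\<in>{1..k}. 0 \<le> s i"
    and tail: "\<And>i. i \<in> {1..k} \<Longrightarrow> real i * (\<Sum>r=i..k. \<mu> r) \<le> c"
  shows "(\<Sum>r=\<rho>..k. \<mu> r * (\<Sum>i=1..r. real i * s i)) \<le> c * (\<Sum>i=1..k. s i)"
proof -
  have "(\<Sum>r=\<rho>..k. \<mu> r * (\<Sum>i=1..r. real i * s i))
      = (\<Sum>r=\<rho>..k. \<Sum>i=1..k. if i \<le> r then \<mu> r * (real i * s i) else 0)"
  proof (rule sum.cong [OF refl])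
    fix r assume "r \<in> {\<rho>..k}"
    then have "{1..k} \<inter> {i. i \<le> r} = {1..r}" by auto
    then show "\<mu> r * (\<Sum>i=1..r. real i * s i) = (\<Sum>i=1..k. if i \<le> r then \<mu> r * (real i * s i) else 0)"
      by (simp add: sum.If_cases sum_distrib_left)
  qed
  also have "\<dots> = (\<Sum>i=1..k. \<Sum>r=\<rho>..k. if i \<le> r then \<mu> r * (real i * s i) else 0)"
    by (rule sum.swap)
  also have "\<dots> \<le> (\<Sum>i=1..k. s i * c)"
  proof (rule sum_mono)
    fix i assume i: "i \<in> {1..k}"
    have "(\<Sum>r=\<rho>..k. if i \<le> r then \<mu> r * (real i * s i) else 0)
        = s i * (real i * (\<Sum>r\<in>{\<rho>..k} \<inter> {r. i \<le> r}. \<mu> r))"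
      by (simp add: sum.If_cases sum_distrib_left algebra_simps)
    also have "\<dots> \<le> s i * (real i * (\<Sum>r=i..k. \<mu> r))"
      using s_nonneg i by (intro mult_left_mono sum_mono2) (auto simp: \<mu>_nonneg)
    also have "\<dots> \<le> s i * c"
      using tail[OF i] s_nonneg i by (intro mult_left_mono) auto
    finally show "(\<Sum>r=\<rho>..k. if i \<le> r then \<mu> r * (real i * s i) else 0) \<le> s i * c" .
  qed
  also have "\<dots> = c * (\<Sum>i=1..k. s i)"
    by (simp add: sum_distrib_left mult.commute)
  finally show ?thesis .
qed

lemma sum_min_prefix_sums_le_dual:
  fixes g \<mu> s :: "nat \<Rightarrow> real"
  assumes \<mu>_nonneg: "\<And>r. 0 \<le> \<mu> r" and \<mu>_le_1: "\<And>r. \<mu> r \<le> 1"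
    and s_nonneg: "\<forall>i\<in>{1..k}. 0 \<le> s i" and s_sum: "(\<Sum>i=1..k. s i) \<le> real \<rho>"
    and tail: "\<And>i. i \<in> {1..k} \<Longrightarrow> real i * (\<Sum>r=i..k. \<mu> r) \<le> c" and "0 \<le> c"
  shows "(\<Sum>r=\<rho>..k. min (g r) (\<Sum>i=1..r. real i * s i))
           \<le> (\<Sum>r=\<rho>..k. (1 - \<mu> r) * g r) + real \<rho> * c"
proof -
  have "(\<Sum>r=\<rho>..k. min (g r) (\<Sum>i=1..r. real i * s i))
      \<le> (\<Sum>r=\<rho>..k. (1 - \<mu> r) * g r + \<mu> r * (\<Sum>i=1..r. real i * s i))"
    by (intro sum_mono min_le_convex_combination \<mu>_nonneg \<mu>_le_1)
  also have "\<dots> \<le> (\<Sum>r=\<rho>..k. (1 - \<mu> r) * g r) + c * (\<Sum>i=1..k. s i)"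
    unfolding sum.distrib using sum_weighted_prefix_sums_le[OF \<mu>_nonneg s_nonneg tail] by simp
  also have "c * (\<Sum>i=1..k. s i) \<le> real \<rho> * c"
    using s_sum \<open>0 \<le> c\<close> by (simp add: mult.commute mult_left_mono)
  finally show ?thesis by simp
qed

lemma sum_inverse_consecutive_products:
  assumes "0 < i" "i \<le> j"
  shows "(\<Sum>r=i..<j. 1 / (real r * (real r + 1))) = 1 / real i - 1 / real j"
  using assms(2)
proof (induction j rule: dec_induct)
  case (step m)
  then have "1 / (real m * (real m + 1)) = 1 / real m - 1 / (real m + 1)"
    using assms(1) by (simp add: field_simps)
  with step show ?case by simp
qed simp

locale ramp_weights =
  fixes k A B :: nat
  assumes A_pos: "0 < A" and A_less_B: "A < B" and B_le_k: "B \<le> k"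
    and B_ge_half: "k + 1 \<le> 2 * B"
    and cap_le: "real B * (real k + 1 - real B) \<le> real A * (real A + 1)"
begin

definition cap :: real where
  "cap = real B * (real k + 1 - real B)"

definition weight :: "nat \<Rightarrow> real" where
  "weight r = (if r < A then 0 else if r < B then cap / (real r * (real r + 1)) else 1)"

lemma cap_nonneg: "0 \<le> cap"
  using B_le_k by (simp add: cap_def)

lemma weight_nonneg: "0 \<le> weight r"
  using cap_nonneg by (simp add: weight_def)

lemma weight_le_1: "weight r \<le> 1"
proof (cases "A \<le> r \<and> r < B")
  case True
  then have "real A * (real A + 1) \<le> real r * (real r + 1)"
    by (intro mult_mono) auto
  with cap_le have "cap \<le> real r * (real r + 1)"
    by (simp add: cap_def)
  with True A_pos show ?thesis
    by (simp add: weight_def)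
qed (auto simp: weight_def)

lemma tail_sum_weight_middle:
  assumes "A \<le> i" "i \<le> B"
  shows "real i * (\<Sum>r=i..k. weight r) = cap"
proof -
  have "{i..k} = {i..<B} \<union> {B..k}"
    using assms B_le_k by auto
  then have "(\<Sum>r=i..k. weight r) = (\<Sum>r=i..<B. weight r) + (\<Sum>r=B..k. weight r)"
    by (simp add: sum.union_disjoint ivl_disj_int)
  also have "(\<Sum>r=i..<B. weight r) = cap * (\<Sum>r=i..<B. 1 / (real r * (real r + 1)))"
    unfolding sum_distrib_left using assms by (intro sum.cong) (auto simp: weight_def)
  also have "\<dots> = cap * (1 / real i - 1 / real B)"
    using sum_inverse_consecutive_products[of i B] assms A_pos by simp
  also have "(\<Sum>r=B..k. weight r) = real k + 1 - real B"
    using A_less_B B_le_k by (simp add: weight_def of_nat_diff)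
  also have "\<dots> = cap / real B"
    using A_less_B by (simp add: cap_def)
  finally show ?thesis
    using assms A_pos by (simp add: field_simps)
qed

lemma tail_sum_weight_le_cap:
  assumes "0 < i" "i \<le> k"
  shows "real i * (\<Sum>r=i..k. weight r) \<le> cap"
proof -
  consider "i < A" | "A \<le> i" "i \<le> B" | "B < i"
    by linarith
  then show ?thesis
  proof cases
    case 1
    have "{i..k} = {i..<A} \<union> {A..k}"
      using 1 A_less_B B_le_k by auto
    then have "(\<Sum>r=i..k. weight r) = (\<Sum>r=i..<A. weight r) + (\<Sum>r=A..k. weight r)"
      by (simp add: sum.union_disjoint ivl_disj_int)
    also have "(\<Sum>r=i..<A. weight r) = 0"
      by (simp add: weight_def)
    finally have "real i * (\<Sum>r=i..k. weight r) \<le> real A * (\<Sum>r=A..k. weight r)"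
      using 1 by (simp add: mult_right_mono sum_nonneg weight_nonneg)
    also have "\<dots> = cap"
      using A_less_B by (simp add: tail_sum_weight_middle)
    finally show ?thesis .
  next
    case 2
    then show ?thesis by (simp add: tail_sum_weight_middle)
  next
    case 3
    then have "real i * (\<Sum>r=i..k. weight r) = real i * (real k + 1 - real i)"
      using assms A_less_B by (simp add: weight_def of_nat_diff)
    also have "\<dots> \<le> cap"
    proof -
      have "0 \<le> (real i - real B) * (real i + real B - real k - 1)"
        using 3 B_ge_half by (intro mult_nonneg_nonneg) auto
      then show ?thesis by (simp add: cap_def algebra_simps)
    qed
    finally show ?thesis .
  qed
qed

definition cubic :: "real \<Rightarrow> real" where
  "cubic x = (real B ^ 3 - x ^ 3) / 12 - cap * (real B - x) / 4"

(* potential r is the integral over [r, B] of (1 - w x) x^2/4, where w x = 0 below A and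
   w x = cap / x^2 on [A, B) is a continuous analogue of weight. *)
definition potential :: "nat \<Rightarrow> real" where
  "potential r = (if r < A then cubic (real A) + (real A ^ 3 - real r ^ 3) / 12
                  else if r < B then cubic (real r) else 0)"

lemma potential_below: "r \<le> A \<Longrightarrow> potential r = cubic (real A) + (real A ^ 3 - real r ^ 3) / 12"
  using A_less_B by (auto simp: potential_def)

lemma potential_middle: "A \<le> r \<Longrightarrow> r \<le> B \<Longrightarrow> potential r = cubic (real r)"
  by (auto simp: potential_def cubic_def)

lemma defect_le_potential_drop:
  "(1 - weight r) * (real r ^ 2 / 4) \<le> potential r - potential (Suc r) + (real A + 1) / 4"
proof -
  consider "r < A" | "A \<le> r" "r < B" | "B \<le> r"
    by linarith
  then show ?thesis
  proof cases
    case 1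
    then have "(1 - weight r) * (real r ^ 2 / 4) = real r ^ 2 / 4"
      by (simp add: weight_def)
    also have "\<dots> \<le> (3 * real r ^ 2 + 3 * real r + 1) / 12 + (real A + 1) / 4"
      by (simp add: add_divide_distrib)
    also have "(3 * real r ^ 2 + 3 * real r + 1) / 12 = potential r - potential (Suc r)"
      using 1 by (simp add: potential_below field_simps power2_eq_square power3_eq_cube)
    finally show ?thesis .
  next
    case 2
    have "cap \<le> (real r + 1) * (real A + 1)"
    proof -
      have "real A * (real A + 1) \<le> (real r + 1) * (real A + 1)"
        using 2 by (intro mult_right_mono) auto
      then show ?thesis
        using cap_le unfolding cap_def by linarith
    qed
    have "0 < real r"
      using 2 A_pos by simp
    with 2 have "(1 - weight r) * (real r ^ 2 / 4) = real r ^ 2 / 4 - cap / 4 + cap / (4 * (real r + 1))"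
      by (simp add: weight_def divide_simps) (simp add: algebra_simps power2_eq_square)
    also have "\<dots> \<le> real r ^ 2 / 4 - cap / 4 + (real A + 1) / 4"
      using \<open>cap \<le> (real r + 1) * (real A + 1)\<close> by (simp add: divide_le_eq algebra_simps)
    also have "\<dots> \<le> (3 * real r ^ 2 + 3 * real r + 1) / 12 - cap / 4 + (real A + 1) / 4"
      by (simp add: add_divide_distrib)
    also have "(3 * real r ^ 2 + 3 * real r + 1) / 12 - cap / 4 = potential r - potential (Suc r)"
      using 2 by (simp add: potential_middle cubic_def field_simps power2_eq_square power3_eq_cube)
    finally show ?thesis .
  next
    case 3
    then show ?thesis
      using A_less_B by (simp add: potential_def weight_def)
  qed
qed

lemma sum_defect_le_potential:
  assumes "\<rho> \<le> k"
  shows "(\<Sum>r=\<rho>..k. (1 - weight r) * (real r ^ 2 / 4))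
           \<le> potential \<rho> + real (Suc k - \<rho>) * ((real A + 1) / 4)"
proof -
  have "(\<Sum>r=\<rho>..k. (1 - weight r) * (real r ^ 2 / 4))
      \<le> (\<Sum>r=\<rho>..k. (potential r - potential (Suc r)) + (real A + 1) / 4)"
    by (intro sum_mono defect_le_potential_drop)
  also have "\<dots> = potential \<rho> - potential (Suc k) + real (Suc k - \<rho>) * ((real A + 1) / 4)"
    using assms sum_Suc_diff[of \<rho> k "\<lambda>r. - potential r"] by (simp add: sum.distrib sum_negf [symmetric])
  also have "potential (Suc k) = 0"
    using A_less_B B_le_k by (simp add: potential_def)
  finally show ?thesis
    by simp
qed

lemma potential_plus_cap_le:
  assumes A_sq: "real A ^ 2 \<le> 4 * cap" and "\<rho> < B"
  shows "potential \<rho> + real \<rho> * cap \<le> cubic (real (max \<rho> A)) + real (max \<rho> A) * cap"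
proof (cases "\<rho> < A")
  case True
  have "real A * real \<rho> \<le> real A * real A" "real \<rho> * real \<rho> \<le> real A * real A"
    using True by (simp_all add: mult_mono)
  then have square_sum: "real A ^ 2 + real A * real \<rho> + real \<rho> ^ 2 \<le> 3 * real A ^ 2"
    by (simp add: power2_eq_square)
  have "real A ^ 3 - real \<rho> ^ 3
      = (real A - real \<rho>) * (real A ^ 2 + real A * real \<rho> + real \<rho> ^ 2)"
    by (simp add: algebra_simps power2_eq_square power3_eq_cube)
  also have "\<dots> \<le> (real A - real \<rho>) * (12 * cap)"
    using True A_sq square_sum by (intro mult_left_mono) auto
  also have "\<dots> = 12 * (real A * cap) - 12 * (real \<rho> * cap)"
    by (simp add: algebra_simps)
  finally have "(real A ^ 3 - real \<rho> ^ 3) / 12 \<le> real A * cap - real \<rho> * cap"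
    by argo
  moreover have "max \<rho> A = A"
    using True by simp
  ultimately show ?thesis
    using potential_below[of \<rho>] True by simp argo
next
  case False
  with assms show ?thesis
    by (simp add: potential_middle)
qed

lemma sum_min_prefix_sums_le_potential:
  fixes s :: "nat \<Rightarrow> real"
  assumes s_nonneg: "\<forall>i\<in>{1..k}. 0 \<le> s i" and s_sum: "(\<Sum>i=1..k. s i) \<le> real \<rho>"
    and "\<rho> \<le> k"
  shows "(\<Sum>r=\<rho>..k. min (real r ^ 2 / 4) (\<Sum>i=1..r. real i * s i))
           \<le> potential \<rho> + real \<rho> * cap + real (Suc k - \<rho>) * ((real A + 1) / 4)"
proof -
  have "(\<Sum>r=\<rho>..k. min (real r ^ 2 / 4) (\<Sum>i=1..r. real i * s i))
      \<le> (\<Sum>r=\<rho>..k. (1 - weight r) * (real r ^ 2 / 4)) + real \<rho> * cap"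
    by (rule sum_min_prefix_sums_le_dual)
      (use weight_nonneg weight_le_1 s_nonneg s_sum tail_sum_weight_le_cap cap_nonneg in auto)
  with sum_defect_le_potential[OF \<open>\<rho> \<le> k\<close>] show ?thesis
    by linarith
qed

end

lemma cap_choice_upper:
  fixes K b :: real
  assumes "64 \<le> K" "125 * K / 129 - 1 \<le> b" "b \<le> 125 * K / 129"
  shows "b * (K + 1 - b) \<le> 500 * K ^ 2 / 16641 + 2 * K"
proof -
  have "b * (K + 1 - b) \<le> (125 * K / 129) * (K + 2 - 125 * K / 129)"
    using assms by (intro mult_mono) auto
  also have "\<dots> = 500 * K ^ 2 / 16641 + 250 * K / 129"
    by (simp add: field_simps power2_eq_square)
  finally show ?thesis
    using assms by linarith
qed

lemma cap_choice_lower: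
  fixes K b :: real
  assumes "64 \<le> K" "125 * K / 129 - 1 \<le> b" "b \<le> 125 * K / 129"
  shows "500 * K ^ 2 / 16641 - 4 * K / 129 \<le> b * (K + 1 - b)"
proof -
  have "(125 * K / 129 - 1) * (4 * K / 129) \<le> b * (K + 1 - b)"
    using assms by (intro mult_mono) auto
  then show ?thesis
    by (simp add: field_simps power2_eq_square)
qed

lemma cubic_profile_le:
  fixes K b x :: real
  assumes K: "64 \<le> K" and b: "125 * K / 129 - 1 \<le> b" "b \<le> 125 * K / 129"
    and x: "0 \<le> x" "x \<le> K"
  defines "c \<equiv> b * (K + 1 - b)"
  shows "(b ^ 3 - x ^ 3) / 12 - c * (b - x) / 4 + x * c \<le> 15625 / 199692 * K ^ 3 + 3 * K ^ 2"
proof -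
  define y where "y = 125 * K / 129"
  define t where "t = 50 * K / 129"
  (* x^3 lies above its tangent at t, the maximiser of 15 c x - x^3 (as 5 c ~ t^2) *)
  have "0 \<le> (x - t) ^ 2 * (x + 2 * t)"
    using x K by (simp add: t_def)
  then have cube_tangent: "- (x ^ 3) \<le> - 3 * t ^ 2 * x + 2 * t ^ 3"
    by (simp add: algebra_simps power2_eq_square power3_eq_cube)
  have "b ^ 2 * (4 * b - 3 * (K + 1)) \<le> y ^ 2 * (4 * y - 3 * K)"
  proof -
    have "b ^ 2 * (4 * b - 3 * (K + 1)) \<le> b ^ 2 * (4 * y - 3 * K)"
      using b by (intro mult_left_mono) (auto simp: y_def)
    also have "\<dots> \<le> y ^ 2 * (4 * y - 3 * K)"
      using b K by (intro mult_right_mono power_mono) (auto simp: y_def)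
    finally show ?thesis .
  qed
  then have cubic_in_b: "b ^ 3 - 3 * (c * b) \<le> 4 * y ^ 3 - 3 * y ^ 2 * K"
    by (simp add: c_def algebra_simps power2_eq_square power3_eq_cube)
  have linear_in_x: "x * (5 * c - t ^ 2) \<le> 10 * K ^ 2"
  proof -
    have "5 * c - t ^ 2 \<le> 10 * K"
      using cap_choice_upper[OF K b] by (simp add: c_def t_def power2_eq_square)
    then have "x * (5 * c - t ^ 2) \<le> x * (10 * K)"
      using x by (intro mult_left_mono)
    also have "\<dots> \<le> K * (10 * K)"
      using x K by (intro mult_right_mono) auto
    finally show ?thesis
      by (simp add: power2_eq_square)
  qed
  define L where "L = (b ^ 3 - x ^ 3) / 12 - c * (b - x) / 4 + x * c"
  have "12 * L = (b ^ 3 - 3 * (c * b)) - x ^ 3 + 15 * (x * c)"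
    by (simp add: L_def field_simps)
  also have "\<dots> \<le> (4 * y ^ 3 - 3 * y ^ 2 * K + 2 * t ^ 3) + 3 * (x * (5 * c - t ^ 2))"
    using cube_tangent cubic_in_b by (simp add: algebra_simps)
  also have "4 * y ^ 3 - 3 * y ^ 2 * K + 2 * t ^ 3 = 12 * (15625 / 199692 * K ^ 3)"
    by (simp add: y_def t_def power2_eq_square power3_eq_cube field_simps)
  finally have "12 * L \<le> 12 * (15625 / 199692 * K ^ 3) + 3 * (x * (5 * c - t ^ 2))" .
  then show ?thesis
    using linear_in_x zero_le_power2[of K] unfolding L_def [symmetric] by linarith
qed

lemma cuts_bounds:
  "real k / 4 \<le> real (k div 4 + 1)" "real (k div 4 + 1) \<le> real k / 4 + 1"
  "125 * real k / 129 - 1 \<le> real (125 * k div 129)" "real (125 * k div 129) \<le> 125 * real k / 129"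
  by linarith+

lemma ramp_weights_choice:
  assumes "64 \<le> k"
  shows "ramp_weights k (k div 4 + 1) (125 * k div 129)"
proof -
  define K where "K = real k"
  have K: "64 \<le> K"
    using assms by (simp add: K_def)
  note cuts = cuts_bounds[of k, folded K_def]
  have "real (125 * k div 129) * (K + 1 - real (125 * k div 129)) \<le> 500 * K ^ 2 / 16641 + 2 * K"
    using cap_choice_upper[OF K cuts(3,4)] .
  also have "\<dots> \<le> K / 4 * (K / 4)"
    using K by (simp add: power2_eq_square field_simps)
  also have "\<dots> \<le> real (k div 4 + 1) * (real (k div 4 + 1) + 1)"
    using cuts(1) K by (intro mult_mono) auto
  finally have "real (125 * k div 129) * (K + 1 - real (125 * k div 129))
      \<le> real (k div 4 + 1) * (real (k div 4 + 1) + 1)" .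
  with cuts K show ?thesis
    unfolding ramp_weights_def by (auto simp: K_def)
qed

lemma potential_plus_cap_choice_le:
  fixes k \<rho> :: nat
  defines "A \<equiv> k div 4 + 1" and "B \<equiv> 125 * k div 129"
  assumes k: "64 \<le> k" and \<rho>_le_k: "\<rho> \<le> k"
  shows "ramp_weights.potential k A B \<rho> + real \<rho> * ramp_weights.cap k B
           \<le> 15625 / 199692 * real k ^ 3 + 3 * real k ^ 2"
proof -
  define K where "K = real k"
  interpret ramp_weights k A B
    unfolding A_def B_def using ramp_weights_choice[OF k] .
  have K: "64 \<le> K"
    using k by (simp add: K_def)
  have K_sq: "64 * K \<le> K ^ 2"
    using K by (simp add: power2_eq_square mult_right_mono)
  note cuts = cuts_bounds[of k, folded A_def B_def K_def]
  have cap_eq: "cap = real B * (K + 1 - real B)"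
    by (simp add: cap_def K_def)
  have "potential \<rho> + real \<rho> * cap \<le> 15625 / 199692 * K ^ 3 + 3 * K ^ 2"
  proof (cases "\<rho> < B")
    case True
    have "real A ^ 2 \<le> (K / 4 + 1) ^ 2"
      using cuts(2) by (intro power_mono) auto
    also have "\<dots> = K ^ 2 / 16 + K / 2 + 1"
      by (simp add: power2_eq_square field_simps)
    also have "\<dots> \<le> 4 * (500 * K ^ 2 / 16641 - 4 * K / 129)"
      using K K_sq by (simp add: field_simps)
    also have "\<dots> \<le> 4 * cap"
      using cap_choice_lower[OF K cuts(3,4)] cap_eq by simp
    finally have "potential \<rho> + real \<rho> * cap \<le> cubic (real (max \<rho> A)) + real (max \<rho> A) * cap"
      using True by (rule potential_plus_cap_le)
    also have "\<dots> \<le> 15625 / 199692 * K ^ 3 + 3 * K ^ 2"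
      unfolding cubic_def cap_eq
      by (rule cubic_profile_le[OF K cuts(3,4)]) (use \<rho>_le_k A_less_B B_le_k in \<open>auto simp: K_def\<close>)
    finally show ?thesis .
  next
    case False
    then have "potential \<rho> = 0"
      using A_less_B by (simp add: potential_def)
    have "real \<rho> * cap \<le> K * (500 * K ^ 2 / 16641 + 2 * K)"
      using \<rho>_le_k cap_nonneg cap_choice_upper[OF K cuts(3,4)] cap_eq
      by (intro mult_mono) (auto simp: K_def)
    also have "\<dots> \<le> 15625 / 199692 * K ^ 3 + 3 * K ^ 2"
      using K by (simp add: power2_eq_square power3_eq_cube field_simps)
    finally show ?thesis
      using \<open>potential \<rho> = 0\<close> by simp
  qed
  then show ?thesis
    by (simp add: K_def)
qed

lemma sum_min_prefix_sums_le_trivial: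
  "(\<Sum>r=\<rho>..k. min (real r ^ 2 / 4) (\<Sum>i=1..r. real i * s i)) \<le> (real k + 1) * (real k ^ 2 / 4)"
proof -
  have "(\<Sum>r=\<rho>..k. min (real r ^ 2 / 4) (\<Sum>i=1..r. real i * s i)) \<le> (\<Sum>r=\<rho>..k. real k ^ 2 / 4)"
    by (intro sum_mono min.coboundedI1) (simp add: power_mono)
  also have "\<dots> \<le> (real k + 1) * (real k ^ 2 / 4)"
    by (simp add: mult_right_mono)
  finally show ?thesis .
qed

lemma sum_min_prefix_sums_le:
  fixes k \<rho> :: nat and s :: "nat \<Rightarrow> real"
  assumes "0 < \<rho>" "\<rho> \<le> k"
    and s_nonneg: "\<forall>i\<in>{1..k}. 0 \<le> s i" and s_sum: "(\<Sum>i=1..k. s i) \<le> real \<rho>"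
  shows "(\<Sum>r=\<rho>..k. min (real r ^ 2 / 4) (\<Sum>i=1..r. real i * s i))
           \<le> 15625 / 199692 * real k ^ 3 + 20 * (real k + 1) ^ 2"
proof (cases "k < 64")
  case True
  then have "real k * real k \<le> 64 * real k"
    by (intro mult_right_mono) auto
  then have "real k ^ 2 / 4 \<le> 16 * (real k + 1)"
    by (simp add: power2_eq_square)
  have "(\<Sum>r=\<rho>..k. min (real r ^ 2 / 4) (\<Sum>i=1..r. real i * s i)) \<le> (real k + 1) * (real k ^ 2 / 4)"
    by (rule sum_min_prefix_sums_le_trivial)
  also have "\<dots> \<le> (real k + 1) * (16 * (real k + 1))"
    using \<open>real k ^ 2 / 4 \<le> 16 * (real k + 1)\<close> by (intro mult_left_mono) auto
  also have "\<dots> \<le> 20 * (real k + 1) ^ 2"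
    by (simp add: power2_eq_square)
  also have "\<dots> \<le> 15625 / 199692 * real k ^ 3 + 20 * (real k + 1) ^ 2"
    by simp
  finally show ?thesis .
next
  case False
  define A B where "A = k div 4 + 1" and "B = 125 * k div 129"
  interpret ramp_weights k A B
    unfolding A_def B_def using False by (intro ramp_weights_choice) simp
  have "(\<Sum>r=\<rho>..k. min (real r ^ 2 / 4) (\<Sum>i=1..r. real i * s i))
      \<le> (potential \<rho> + real \<rho> * cap) + real (Suc k - \<rho>) * ((real A + 1) / 4)"
    using sum_min_prefix_sums_le_potential[OF s_nonneg s_sum \<open>\<rho> \<le> k\<close>] by simp
  also have "\<dots> \<le> (15625 / 199692 * real k ^ 3 + 3 * real k ^ 2) + real k * ((real k / 4 + 2) / 4)"
  proof (rule add_mono)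
    show "potential \<rho> + real \<rho> * cap \<le> 15625 / 199692 * real k ^ 3 + 3 * real k ^ 2"
      unfolding A_def B_def using False \<open>\<rho> \<le> k\<close> by (intro potential_plus_cap_choice_le) simp_all
    show "real (Suc k - \<rho>) * ((real A + 1) / 4) \<le> real k * ((real k / 4 + 2) / 4)"
      using assms cuts_bounds(2)[of k] by (intro mult_mono) (auto simp: A_def)
  qed
  also have "\<dots> \<le> 15625 / 199692 * real k ^ 3 + 20 * (real k + 1) ^ 2"
    by (simp add: power2_eq_square field_simps)
  finally show ?thesis .
qed

theorem proposition7:
  shows "\<exists>f :: nat \<Rightarrow> real.
    (\<lambda>n. f n / real n ^ 3) \<longlonglongrightarrow> 0 \<and>
    (\<forall>(n::nat) (\<rho>::nat) (s :: nat \<Rightarrow> real).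
       0 < n \<longrightarrow> 0 < \<rho> \<longrightarrow> real \<rho> < real n / 2 \<longrightarrow>
       (\<forall>i\<in>{1..n div 2}. 0 \<le> s i) \<longrightarrow>
       (\<Sum>i=1..n div 2. s i) \<le> real \<rho> \<longrightarrow>
       (\<Sum>r=\<rho>..n div 2. min (real r ^ 2 / 4) (\<Sum>i=1..r. real i * s i))
         \<le> 15625 * real n ^ 3 / 1597536 + f n)"
proof (intro exI[of _ "\<lambda>n. 20 * (real n + 1) ^ 2"] conjI allI impI)
  show "(\<lambda>n. 20 * (real n + 1) ^ 2 / real n ^ 3) \<longlonglongrightarrow> 0"
    by real_asymp
next
  fix n \<rho> :: nat and s :: "nat \<Rightarrow> real"
  assume "0 < n" "0 < \<rho>" "real \<rho> < real n / 2"
    and "\<forall>i\<in>{1..n div 2}. 0 \<le> s i" "(\<Sum>i=1..n div 2. s i) \<le> real \<rho>"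
  moreover have "\<rho> \<le> n div 2"
    using \<open>real \<rho> < real n / 2\<close> by linarith
  ultimately have "(\<Sum>r=\<rho>..n div 2. min (real r ^ 2 / 4) (\<Sum>i=1..r. real i * s i))
      \<le> 15625 / 199692 * real (n div 2) ^ 3 + 20 * (real (n div 2) + 1) ^ 2"
    by (intro sum_min_prefix_sums_le) simp_all
  also have "\<dots> \<le> 15625 * real n ^ 3 / 1597536 + 20 * (real n + 1) ^ 2"
  proof -
    have "real (2 * (n div 2)) ^ 3 \<le> real n ^ 3"
      by (intro power_mono) auto
    then have "8 * real (n div 2) ^ 3 \<le> real n ^ 3"
      by simp
    moreover have "(real (n div 2) + 1) ^ 2 \<le> (real n + 1) ^ 2"
      by (intro power_mono) auto
    ultimately show ?thesis
      by linarith
  qed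
  finally show "(\<Sum>r=\<rho>..n div 2. min (real r ^ 2 / 4) (\<Sum>i=1..r. real i * s i))
      \<le> 15625 * real n ^ 3 / 1597536 + 20 * (real n + 1) ^ 2" .
qed

end
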